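(* Suppose $\tau_f\in(\tau_2^i,\tau_c)$. Then $$p'(\tau)<\frac{2h(\tau)-2h(\tau_f)}{\tau^2-\tau_f^2}<p'(\tau_f)\quad\text{for }\tau\in\big(1,\tau_{pr}(\tau_{po}(\tau_f))\big).$$ Moreover, for any $\tau_b\in(1,\tau_{pr}(\tau_{po}(\tau_f)))$, Liu's extended entropy condition $\frac{2h(\tau_f)-2h(\tau_b)}{\tau_f^2-\tau_b^2}<\frac{2h(\tau_f)-2h(\tau)}{\tau_f^2-\tau^2}$ for all $\tau\in(\tau_b,\tau_f)$ holds.
   Context: The pressure is $p(\tau)=\frac{\mathcal S}{(\tau-1)^\gamma}-\frac{1}{\tau^2}$ for $\tau>1$, with constants $1<\gamma<2$, $\mathcal S>0$, assumed such that there exist $1<\tau_1^i<\tau_2^i$ with $p'<0$ on $(1,\infty)$, $p''>0$ on $(1,\tau_1^i)\cup(\tau_2^i,\infty)$, $p''<0$ on $(\tau_1^i,\tau_2^i)$. The function $h$ satisfies $h'(\tau)=\tau p'(\tau)$. $\tau_c$ is the unique $\tau_c\in(\tau_1^i,\infty)$ with $p'(\tau_1^i)=\frac{2h(\tau_c)-2h(\tau_1^i)}{\tau_c^2-(\tau_1^i)^2}$. For $\tau_f\in(\tau_2^i,\tau_c)$, $\tau_{po}(\tau_f)$ is the unique $\tau\in(\tau_1^i,\tau_2^i)$ with $p'(\tau)=\frac{2h(\tau)-2h(\tau_f)}{\tau^2-\tau_f^2}$. For $\sigma\in(\tau_1^i,\tau_2^i)$, $\tau_{pr}(\sigma)$ is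 the unique $\tau\in(1,\sigma)$ with $\frac{2h(\tau)-2h(\sigma)}{\tau^2-\sigma^2}=p'(\sigma)$. *)

theory Defs
  imports "HOL-Analysis.Analysis"
begin

definition pres :: "real \<Rightarrow> real \<Rightarrow> real \<Rightarrow> real" where
  "pres S \<gamma> t = S / (t - 1) powr \<gamma> - 1 / t ^ 2"

definition chord :: "(real \<Rightarrow> real) \<Rightarrow> real \<Rightarrow> real \<Rightarrow> real" where
  "chord h a b = (2 * h a - 2 * h b) / (a ^ 2 - b ^ 2)"

end

theory Submission
  imports Defs
begin

text \<open>
  Put c = p'(tpo) and tilt(s) = 2h(s) - c s^2. Then tilt' = 2s(p' - c), and a chord of slope c
  joins a and b exactly when tilt(a) = tilt(b); so tilt(tpr) = tilt(tpo) = tilt(tf). The shape of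
  p' forces p' - c to be negative near 1, positive just before tpo, negative just after it and
  positive from some point before tf on. Hence tilt > tilt(tpo) on (1, tpr) and tilt \<le> tilt(tpo)
  on [tpr, tf], which gives chord(t, tf) < c < p'(tf) for t < tpr, and comparing with the tilt of
  slope p'(t) also p'(t) < chord(t, tf). For Liu's condition with t \<ge> tpr both chords from tf are
  compared with c; for t < tpr, the tilt of slope k = chord(tf, t) decreases on (tb, t) because
  p' < p'(t) < k there, and this places chord(tf, tb) below k.
\<close>

lemma pres_has_real_derivative:
  assumes "1 < t"
  shows "(pres S g has_real_derivative 2 / t ^ 3 - S * g * (t - 1) powr (- g - 1)) (at t)"
proof -
  have "((\<lambda>t. S * (t - 1) powr (- g) - 1 / t ^ 2) has_real_derivative
          2 / t ^ 3 - S * g * (t - 1) powr (- g - 1)) (at t)"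
    using assms by (auto intro!: derivative_eq_intros simp: field_simps power_eq_if)
  then show ?thesis
    by (rule has_field_derivative_transform_within_open[where S = "{1<..}"])
       (use assms in \<open>auto simp: pres_def powr_minus_divide\<close>)
qed

lemma deriv_pres_has_real_derivative:
  assumes "1 < t"
  shows "(deriv (pres S g) has_real_derivative deriv (deriv (pres S g)) t) (at t)"
proof -
  let ?p' = "\<lambda>t. 2 / t ^ 3 - S * g * (t - 1) powr (- g - 1)"
  have "?p' differentiable (at t)"
    unfolding real_differentiable_def using assms by (intro exI) (auto intro!: derivative_eq_intros)
  then obtain D where "(?p' has_real_derivative D) (at t)"
    by (auto simp: real_differentiable_def)
  then have "(deriv (pres S g) has_real_derivative D) (at t)"
    by (rule has_field_derivative_transform_within_open[where S = "{1<..}"])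
       (use assms in \<open>auto intro!: DERIV_imp_deriv[symmetric] pres_has_real_derivative\<close>)
  then show ?thesis
    using DERIV_deriv_iff_real_differentiable real_differentiable_def by blast
qed

lemma strict_mono_on_if_deriv_pos:
  fixes f f' :: "real \<Rightarrow> real"
  assumes I: "is_interval I"
    and f': "\<And>x. x \<in> I \<Longrightarrow> (f has_real_derivative f' x) (at x)"
    and pos: "\<And>x. x \<in> interior I \<Longrightarrow> 0 < f' x"
  shows "strict_mono_on I f"
proof (rule strict_mono_onI)
  fix a b assume ab: "a \<in> I" "b \<in> I" "a < b"
  have sub: "{a..b} \<subseteq> I"
    using mem_is_interval_1_I[OF I ab(1,2)] by auto
  have cont: "continuous_on {a..b} f"
    using sub by (intro continuous_at_imp_continuous_on ballI DERIV_isCont[OF f']) auto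
  have "\<exists>y. (f has_real_derivative y) (at x) \<and> 0 < y" if "a < x" "x < b" for x
  proof (intro exI conjI)
    have "x \<in> interior I"
      using interior_mono[OF sub] that by auto
    then show "(f has_real_derivative f' x) (at x)" "0 < f' x"
      using f' pos interior_subset by auto
  qed
  then show "f a < f b"
    using DERIV_pos_imp_increasing_open[OF \<open>a < b\<close> _ cont] by blast
qed

lemma strict_antimono_on_if_deriv_neg:
  fixes f f' :: "real \<Rightarrow> real"
  assumes "is_interval I"
    and "\<And>x. x \<in> I \<Longrightarrow> (f has_real_derivative f' x) (at x)"
    and "\<And>x. x \<in> interior I \<Longrightarrow> f' x < 0"
  shows "strict_antimono_on I f"
proof -
  have "strict_mono_on I (\<lambda>x. - f x)"
    using assms by (intro strict_mono_on_if_deriv_pos[where f' = "\<lambda>x. - f' x"])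
                   (auto intro!: derivative_eq_intros)
  then show ?thesis
    by (auto simp: monotone_on_def)
qed

definition tilt :: "(real \<Rightarrow> real) \<Rightarrow> real \<Rightarrow> real \<Rightarrow> real" where
  "tilt h c s = 2 * h s - c * s ^ 2"

lemma chord_commute: "chord h a b = chord h b a"
  unfolding chord_def by (metis minus_diff_eq minus_divide_divide)

lemma chord_minus_eq_tilt:
  assumes "a ^ 2 \<noteq> b ^ 2"
  shows "chord h a b - c = (tilt h c a - tilt h c b) / (a ^ 2 - b ^ 2)"
  using assms unfolding chord_def tilt_def by (simp add: field_simps)

lemma chord_eq_iff_tilt_eq:
  assumes "a ^ 2 \<noteq> b ^ 2"
  shows "chord h a b = c \<longleftrightarrow> tilt h c a = tilt h c b"
  using chord_minus_eq_tilt[OF assms, of h c] assms by auto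

lemma chord_less_iff_tilt_less:
  assumes "b ^ 2 < a ^ 2"
  shows "chord h a b < c \<longleftrightarrow> tilt h c a < tilt h c b"
proof -
  have "0 < a ^ 2 - b ^ 2"
    using assms by simp
  have "chord h a b < c \<longleftrightarrow> (tilt h c a - tilt h c b) / (a ^ 2 - b ^ 2) < 0"
    using chord_minus_eq_tilt[of a b h c] assms by auto
  then show ?thesis
    using \<open>0 < a ^ 2 - b ^ 2\<close> by (simp add: divide_less_0_iff)
qed

lemma tilt_has_real_derivative:
  "(h has_real_derivative s * q s) (at s) \<Longrightarrow>
   (tilt h c has_real_derivative 2 * s * (q s - c)) (at s)"
  unfolding tilt_def by (auto intro!: derivative_eq_intros simp: algebra_simps)

lemma tilt_less_if_above:
  assumes "0 < a" "a < b"
    and h': "\<And>s. a \<le> s \<Longrightarrow> s \<le> b \<Longrightarrow> (h has_real_derivative s * q s) (at s)"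
    and above: "\<And>s. a < s \<Longrightarrow> s < b \<Longrightarrow> c < q s"
  shows "tilt h c a < tilt h c b"
proof -
  have "strict_mono_on {a..b} (tilt h c)"
    using assms by (intro strict_mono_on_if_deriv_pos[where f' = "\<lambda>s. 2 * s * (q s - c)"])
                   (auto intro!: tilt_has_real_derivative)
  then show ?thesis
    by (rule strict_mono_onD) (use assms in auto)
qed

lemma tilt_greater_if_below:
  assumes "0 < a" "a < b"
    and h': "\<And>s. a \<le> s \<Longrightarrow> s \<le> b \<Longrightarrow> (h has_real_derivative s * q s) (at s)"
    and below: "\<And>s. a < s \<Longrightarrow> s < b \<Longrightarrow> q s < c"
  shows "tilt h c b < tilt h c a"
proof -
  have "strict_antimono_on {a..b} (tilt h c)"
    using assms by (intro strict_antimono_on_if_deriv_neg[where f' = "\<lambda>s. 2 * s * (q s - c)"])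
                   (auto intro!: tilt_has_real_derivative simp: mult_pos_neg)
  then show ?thesis
    using assms by (auto simp: monotone_on_def)
qed

lemma tilt_le_max:
  assumes "0 < a" "a \<le> t" "t \<le> b"
    and h': "\<And>s. a \<le> s \<Longrightarrow> s \<le> b \<Longrightarrow> (h has_real_derivative s * q s) (at s)"
    and stays_above: "\<And>x y. a < x \<Longrightarrow> x < y \<Longrightarrow> y < b \<Longrightarrow> c < q x \<Longrightarrow> c < q y"
  shows "tilt h c t \<le> max (tilt h c a) (tilt h c b)"
proof (rule ccontr)
  assume "\<not> ?thesis"
  then have gt: "tilt h c a < tilt h c t" "tilt h c b < tilt h c t"
    by auto
  then have "a < t" "t < b"
    using assms by (auto simp: le_less)
  have "(tilt h c has_real_derivative 2 * s * (q s - c)) (at s)" if "a \<le> s" "s \<le> t" for s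
    using that \<open>t < b\<close> by (intro tilt_has_real_derivative h') auto
  then obtain z where z: "a < z" "z < t" "tilt h c t - tilt h c a = (t - a) * (2 * z * (q z - c))"
    using MVT2[of a t "tilt h c" "\<lambda>s. 2 * s * (q s - c)"] \<open>a < t\<close> by blast
  have "0 < (t - a) * (2 * z * (q z - c))"
    using z gt by linarith
  then have "c < q z"
    using z \<open>0 < a\<close> by (simp add: zero_less_mult_iff)
  then have "tilt h c t < tilt h c b"
    using z \<open>0 < a\<close> \<open>t < b\<close>
    by (intro tilt_less_if_above[where q = q]) (auto intro!: h' intro: stays_above[of z])
  then show False
    using gt by simp
qed

locale shock_states =
  fixes q h :: "real \<Rightarrow> real" and t1 t2 tf tpo tpr :: real
  assumes t12: "1 < t1" "t1 < t2"
    and q_mono_left: "strict_mono_on {1<..t1} q"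
    and q_antimono_mid: "strict_antimono_on {t1..t2} q"
    and q_mono_right: "strict_mono_on {t2..} q"
    and h_deriv: "\<And>t. 1 < t \<Longrightarrow> (h has_real_derivative t * q t) (at t)"
    and tf: "t2 < tf"
    and tpo: "t1 < tpo" "tpo < t2" "q tpo = chord h tpo tf"
    and tpr: "1 < tpr" "tpr < tpo" "chord h tpr tpo = q tpo"
begin

lemma q_less_left: "1 < a \<Longrightarrow> a < b \<Longrightarrow> b \<le> t1 \<Longrightarrow> q a < q b"
  by (rule strict_mono_onD[OF q_mono_left]) auto

lemma q_greater_mid: "t1 \<le> a \<Longrightarrow> a < b \<Longrightarrow> b \<le> t2 \<Longrightarrow> q b < q a"
  using q_antimono_mid by (auto simp: monotone_on_def)

lemma q_less_right: "t2 \<le> a \<Longrightarrow> a < b \<Longrightarrow> q a < q b"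
  by (rule strict_mono_onD[OF q_mono_right]) auto

lemma tilt_tf_eq: "tilt h (q tpo) tf = tilt h (q tpo) tpo"
proof -
  have "tpo ^ 2 \<noteq> tf ^ 2"
    using tpo t12 tf by (smt (verit) power_strict_mono zero_less_numeral)
  then show ?thesis
    using tpo(3) chord_eq_iff_tilt_eq[of tpo tf h "q tpo"] by simp
qed

lemma tilt_tpr_eq: "tilt h (q tpo) tpr = tilt h (q tpo) tpo"
proof -
  have "tpr ^ 2 \<noteq> tpo ^ 2"
    using tpr by (smt (verit) power_strict_mono zero_less_numeral)
  then show ?thesis
    using tpr(3) chord_eq_iff_tilt_eq[of tpr tpo h "q tpo"] by simp
qed

lemma q_above_before_tpo: "t1 \<le> s \<Longrightarrow> s < tpo \<Longrightarrow> q tpo < q s"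
  using q_greater_mid tpo(1,2) by simp

lemma q_below_after_tpo: "tpo < s \<Longrightarrow> s \<le> t2 \<Longrightarrow> q s < q tpo"
  using q_greater_mid tpo(1,2) by simp

lemma q_tpo_less_q_tf: "q tpo < q tf"
proof (rule ccontr)
  assume "\<not> q tpo < q tf"
  have "q s < q tpo" if "tpo < s" "s < tf" for s
  proof (cases "s \<le> t2")
    case True
    then show ?thesis using that q_below_after_tpo by simp
  next
    case False
    then show ?thesis using that q_less_right[of s tf] \<open>\<not> q tpo < q tf\<close> by simp
  qed
  then have "tilt h (q tpo) tf < tilt h (q tpo) tpo"
    using tpo t12 tf by (intro tilt_greater_if_below[where q = q] h_deriv) auto
  then show False
    using tilt_tf_eq by simp
qed

lemma tilt_less_before_tpo: "t1 \<le> t \<Longrightarrow> t < tpo \<Longrightarrow> tilt h (q tpo) t < tilt h (q tpo) tpo"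
  using t12 by (intro tilt_less_if_above[where q = q] h_deriv q_above_before_tpo) auto

lemma tpr_less_t1: "tpr < t1"
  using tilt_less_before_tpo[of tpr] tilt_tpr_eq tpr by linarith

lemma q_below_before_tpr: "1 < t \<Longrightarrow> t < tpr \<Longrightarrow> q t < q tpo"
proof (rule ccontr)
  assume t: "1 < t" "t < tpr" and "\<not> q t < q tpo"
  then have "q tpo < q s" if "tpr < s" "s < t1" for s
    using that q_less_left[of t s] by simp
  then have "tilt h (q tpo) tpr < tilt h (q tpo) t1"
    using tpr tpr_less_t1 by (intro tilt_less_if_above[where q = q] h_deriv) auto
  then show False
    using tilt_less_before_tpo[of t1] tilt_tpr_eq tpo by simp
qed

lemma tilt_greater_before_tpr: "1 < t \<Longrightarrow> t < tpr \<Longrightarrow> tilt h (q tpo) tpo < tilt h (q tpo) t"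
  using tilt_greater_if_below[of t tpr h q "q tpo"] tilt_tpr_eq h_deriv q_below_before_tpr by simp

lemma tilt_le_after_tpr:
  assumes "tpr \<le> t" "t \<le> tf"
  shows "tilt h (q tpo) t \<le> tilt h (q tpo) tpo"
proof (cases "t \<le> tpo")
  case True
  have "q tpo < q y" if "tpr < x" "x < y" "y < tpo" "q tpo < q x" for x y
  proof (cases "t1 \<le> y")
    case True
    then show ?thesis using that q_above_before_tpo by simp
  next
    case False
    then show ?thesis using that tpr q_less_left[of x y] by simp
  qed
  then show ?thesis
    using tilt_le_max[of tpr t tpo h q "q tpo"] assms True tpr tilt_tpr_eq h_deriv by simp
next
  case False
  have "q tpo < q y" if "tpo < x" "x < y" "y < tf" "q tpo < q x" for x y
  proof -
    have "t2 < x"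
      using that q_below_after_tpo[of x] by force
    then show ?thesis using that q_less_right[of x y] by simp
  qed
  then show ?thesis
    using tilt_le_max[of tpo t tf h q "q tpo"] assms False tpo t12 tilt_tf_eq h_deriv by simp
qed

lemma tilt_before_tpr_bound:
  assumes "1 < t" "t < tpr"
  shows "tilt h (q tpo) t - tilt h (q tpo) tpo < (q tpo - q t) * (tpr ^ 2 - t ^ 2)"
proof -
  have "tilt h (q t) t < tilt h (q t) tpr"
    using assms tpr_less_t1 by (intro tilt_less_if_above[where q = q] h_deriv q_less_left) auto
  then show ?thesis
    using tilt_tpr_eq by (simp add: tilt_def algebra_simps)
qed

lemma chord_bounds:
  assumes "1 < t" "t < tpr"
  shows "q t < chord h t tf \<and> chord h t tf < q tf"
proof -
  have "t < tf"
    using assms tpr tpo t12 tf by linarith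
  have gap: "0 < tf ^ 2 - t ^ 2" "tpr ^ 2 - t ^ 2 \<le> tf ^ 2 - t ^ 2"
    using assms \<open>t < tf\<close> tpr tpo t12 tf by (smt (verit) power_strict_mono zero_less_numeral)+
  have chord_eq: "chord h t tf = q tpo - (tilt h (q tpo) t - tilt h (q tpo) tpo) / (tf ^ 2 - t ^ 2)"
    using chord_minus_eq_tilt[of t tf h "q tpo"] gap tilt_tf_eq by (simp add: field_simps)
  have "tilt h (q tpo) t - tilt h (q tpo) tpo < (q tpo - q t) * (tf ^ 2 - t ^ 2)"
    using tilt_before_tpr_bound[OF assms] mult_left_mono[OF gap(2), of "q tpo - q t"]
      q_below_before_tpr[OF assms] by linarith
  then have "(tilt h (q tpo) t - tilt h (q tpo) tpo) / (tf ^ 2 - t ^ 2) < q tpo - q t"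
    by (subst pos_divide_less_eq[OF gap(1)])
  then have "q t < chord h t tf"
    unfolding chord_eq by linarith
  moreover have "chord h t tf < q tpo"
    using tilt_greater_before_tpr[OF assms] gap by (simp add: chord_eq)
  ultimately show ?thesis
    using q_tpo_less_q_tf by linarith
qed

lemma liu_entropy_condition:
  assumes tb: "1 < tb" "tb < tpr" and t: "tb < t" "t < tf"
  shows "chord h tf tb < chord h tf t"
proof (cases "tpr \<le> t")
  case True
  have sq: "tb ^ 2 < tf ^ 2" "t ^ 2 < tf ^ 2"
    using tb t by (smt (verit) power_strict_mono zero_less_numeral)+
  have "chord h tf tb < q tpo"
    using chord_less_iff_tilt_less[OF sq(1)] tilt_tf_eq tilt_greater_before_tpr[OF tb] by simp
  moreover have "\<not> chord h tf t < q tpo"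
    using chord_less_iff_tilt_less[OF sq(2)] tilt_tf_eq tilt_le_after_tpr[OF True] t by simp
  ultimately show ?thesis
    by linarith
next
  case False
  define k where "k = chord h tf t"
  have sq: "tb ^ 2 < tf ^ 2" "t ^ 2 \<noteq> tf ^ 2"
    using tb t by (smt (verit) power_strict_mono zero_less_numeral)+
  have "q t < k"
    using chord_bounds[of t] False tb t by (simp add: k_def chord_commute)
  have "q s < k" if "tb < s" "s < t" for s
  proof -
    have "q s < q t"
      using that tb False tpr_less_t1 by (intro q_less_left) auto
    then show ?thesis
      using \<open>q t < k\<close> by simp
  qed
  then have "tilt h k t < tilt h k tb"
    using tb t by (intro tilt_greater_if_below[where q = q] h_deriv) auto
  moreover have "tilt h k tf = tilt h k t"
    using chord_eq_iff_tilt_eq[of tf t h k] sq by (simp add: k_def)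
  ultimately show ?thesis
    using chord_less_iff_tilt_less[OF sq(1)] by (simp add: k_def)
qed

end

theorem proposition3p6:
  fixes S \<gamma> t1 t2 tc tf tpo tpr :: real and h :: "real \<Rightarrow> real"
  defines "p \<equiv> pres S \<gamma>"
  assumes gamma: "1 < \<gamma>" "\<gamma> < 2" and S_pos: "S > 0"
    and t12: "1 < t1" "t1 < t2"
    and p'_neg: "\<forall>t. 1 < t \<longrightarrow> deriv p t < 0"
    and p''_pos: "\<forall>t. (1 < t \<and> t < t1) \<or> t2 < t \<longrightarrow> deriv (deriv p) t > 0"
    and p''_neg: "\<forall>t. t1 < t \<and> t < t2 \<longrightarrow> deriv (deriv p) t < 0"
    and h_deriv: "\<forall>t. 1 < t \<longrightarrow> (h has_real_derivative t * deriv p t) (at t)"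
    and tc: "t1 < tc" "deriv p t1 = chord h tc t1"
    and tc_unique: "\<forall>t. t1 < t \<and> deriv p t1 = chord h t t1 \<longrightarrow> t = tc"
    and tf: "t2 < tf" "tf < tc"
    and tpo: "t1 < tpo" "tpo < t2" "deriv p tpo = chord h tpo tf"
    and tpo_unique: "\<forall>t. t1 < t \<and> t < t2 \<and> deriv p t = chord h t tf \<longrightarrow> t = tpo"
    and tpr: "1 < tpr" "tpr < tpo" "chord h tpr tpo = deriv p tpo"
    and tpr_unique: "\<forall>t. 1 < t \<and> t < tpo \<and> chord h t tpo = deriv p tpo \<longrightarrow> t = tpr"
  shows "(\<forall>t. 1 < t \<and> t < tpr \<longrightarrow>
            deriv p t < chord h t tf \<and> chord h t tf < deriv p tf)
       \<and> (\<forall>tb. 1 < tb \<and> tb < tpr \<longrightarrow>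
            (\<forall>t. tb < t \<and> t < tf \<longrightarrow> chord h tf tb < chord h tf t))"
proof -
  \<comment> \<open>Only the sign pattern of p'' and the chord equations of tpo and tpr matter.\<close>
  have p'': "(deriv p has_real_derivative deriv (deriv p) t) (at t)" if "1 < t" for t
    unfolding p_def using that by (rule deriv_pres_has_real_derivative)
  interpret shock_states "deriv p" h t1 t2 tf tpo tpr
  proof
    show "strict_mono_on {1<..t1} (deriv p)"
      using p'' p''_pos
      by (intro strict_mono_on_if_deriv_pos[where f' = "deriv (deriv p)"]) (auto simp: is_interval_1)
    show "strict_antimono_on {t1..t2} (deriv p)"
      using p'' p''_neg t12
      by (intro strict_antimono_on_if_deriv_neg[where f' = "deriv (deriv p)"]) (auto simp: is_interval_1)
    show "strict_mono_on {t2..} (deriv p)"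
      using p'' p''_pos t12
      by (intro strict_mono_on_if_deriv_pos[where f' = "deriv (deriv p)"]) (auto simp: is_interval_1)
  qed (use t12 h_deriv tf tpo tpr in auto)
  show ?thesis
    using chord_bounds liu_entropy_condition by blast
qed

end
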